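(* Let $A\subset\mathbb{R}$ be a finite convex set and $B\subset\mathbb{R}$ any finite set. For $r\geq1$ let $X_r=\{x\in A+B:\ r\leq r_{A+B}(x)<2r\}$. Then \[ |X_r|\ll \frac{|A||B|^2}{r^3}. \]
   Context: A finite set $A=\{a_1<\dots<a_N\}\subset\mathbb{R}$ is convex if the gaps $a_{i+1}-a_i$ form a strictly monotone sequence. $r_{A+B}(x)$ is the number of pairs $(a,b)\in A\times B$ with $a+b=x$. *)

theory Defs
  imports Complex_Main
begin

definition convex_set :: "real set \<Rightarrow> bool" where
  "convex_set A \<longleftrightarrow> finite A \<and>
     (let a = sorted_list_of_set A; N = length a in
        (\<forall>i j. i < j \<and> j + 1 < N \<longrightarrow> a!(i+1) - a!i < a!(j+1) - a!j) \<or>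
        (\<forall>i j. i < j \<and> j + 1 < N \<longrightarrow> a!(i+1) - a!i > a!(j+1) - a!j))"

definition sumset :: "real set \<Rightarrow> real set \<Rightarrow> real set" where
  "sumset A B = {a + b | a b. a \<in> A \<and> b \<in> B}"

definition rep :: "real set \<Rightarrow> real set \<Rightarrow> real \<Rightarrow> nat" where
  "rep A B x = card {(a, b). a \<in> A \<and> b \<in> B \<and> a + b = x}"

definition Xr :: "real set \<Rightarrow> real set \<Rightarrow> real \<Rightarrow> real set" where
  "Xr A B r = {x \<in> sumset A B. r \<le> real (rep A B x) \<and> real (rep A B x) < 2 * r}"

end

theory Submission
  imports Defs
begin

text \<open>For x \<in> X_r list its representations a_1 < ... < a_k (a_i \<in> A, x - a_i \<in> B), so r \<le> k.
  Consecutive representations a_i < a_{i+1} span disjoint rank intervals of A, and the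
  elements x - a_{i+1} < x - a_i span disjoint rank intervals of B, so the rank steps sum
  to at most |A| and |B|.  By Markov's inequality, for at least r/4 of the indices i both
  steps are at most 4|A|/r and 4|B|/r.  Such a pair (x, a_i) is determined by
  b = x - a_i and the two steps: the B-step gives x - a_{i+1}, hence d = a_{i+1} - a_i,
  and in a convex set a difference d occurs with a prescribed rank step at most once.
  Counting the triples gives |X_r| r/4 \<le> |B| (4|B|/r) (4|A|/r).\<close>

definition rank_in :: "real set \<Rightarrow> real \<Rightarrow> nat" where
  "rank_in S y = card {z\<in>S. z < y}"

lemma rank_in_strict_mono: "finite S \<Longrightarrow> y \<in> S \<Longrightarrow> y < y' \<Longrightarrow> rank_in S y < rank_in S y'"
  unfolding rank_in_def by (rule psubset_card_mono) auto

lemma rank_in_mono: "finite S \<Longrightarrow> y \<le> y' \<Longrightarrow> rank_in S y \<le> rank_in S y'"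
  unfolding rank_in_def by (rule card_mono) auto

lemma rank_in_less_card: "finite S \<Longrightarrow> y \<in> S \<Longrightarrow> rank_in S y < card S"
  unfolding rank_in_def by (rule psubset_card_mono) auto

lemma inj_on_rank_in: "finite S \<Longrightarrow> inj_on (rank_in S) S"
  by (rule inj_onI) (metis less_irrefl linorder_neqE rank_in_strict_mono)

lemma rank_in_nth_sorted_list_of_set:
  assumes "finite S" "i < card S"
  shows "rank_in S (sorted_list_of_set S ! i) = i"
proof -
  let ?L = "sorted_list_of_set S"
  have sorted: "sorted_wrt (<) ?L" and len: "length ?L = card S" by simp_all
  have mem: "?L ! q \<in> S" if "q < card S" for q
    using that assms(1) len by (metis nth_mem set_sorted_list_of_set)
  have "{z\<in>S. z < ?L ! i} = (!) ?L ` {..<i}"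
  proof (intro equalityI subsetI)
    fix z assume "z \<in> {z\<in>S. z < ?L ! i}"
    then obtain q where "q < card S" "z = ?L ! q" "z < ?L ! i"
      using assms(1) len by (metis (mono_tags) in_set_conv_nth mem_Collect_eq set_sorted_list_of_set)
    then show "z \<in> (!) ?L ` {..<i}"
      using sorted_wrt_nth_less[OF sorted, of i q] assms(2) len
      by (cases q i rule: linorder_cases) auto
  next
    fix z assume "z \<in> (!) ?L ` {..<i}"
    then show "z \<in> {z\<in>S. z < ?L ! i}"
      using sorted_wrt_nth_less[OF sorted] mem assms len by auto
  qed
  moreover have "inj_on ((!) ?L) {..<i}"
    using assms by (auto simp: inj_on_def nth_eq_iff_index_eq)
  ultimately show ?thesis unfolding rank_in_def by (simp add: card_image)
qed

lemma nth_sorted_list_of_set_rank_in: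
  assumes "finite S" "y \<in> S"
  shows "sorted_list_of_set S ! rank_in S y = y"
proof -
  obtain q where "q < card S" "y = sorted_list_of_set S ! q"
    using assms by (metis in_set_conv_nth length_sorted_list_of_set set_sorted_list_of_set)
  then show ?thesis using rank_in_nth_sorted_list_of_set[OF assms(1)] by simp
qed

lemma gaps_increasing_shift:
  fixes f :: "nat \<Rightarrow> real"
  assumes gaps: "\<And>i j. i < j \<Longrightarrow> j + 1 < N \<Longrightarrow> f (i + 1) - f i < f (j + 1) - f j"
    and "i < j" and "0 < s" and "j + s < N"
  shows "f (i + s) - f i < f (j + s) - f j"
  using \<open>0 < s\<close> \<open>j + s < N\<close>
proof (induction s rule: nat_induct_non_zero)
  case 1
  then show ?case using gaps \<open>i < j\<close> by simp
next
  case (Suc s)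
  then show ?case using gaps[of "i + s" "j + s"] \<open>i < j\<close> by simp
qed

lemma convex_set_shifted_gaps_neq:
  assumes "convex_set A" and "i < j" and "0 < s" and "j + s < card A"
  defines "L \<equiv> sorted_list_of_set A"
  shows "L ! (i + s) - L ! i \<noteq> L ! (j + s) - L ! j"
proof -
  have "length L = card A" unfolding L_def by simp
  then consider
      "\<And>i j. i < j \<Longrightarrow> j + 1 < card A \<Longrightarrow> L ! (i + 1) - L ! i < L ! (j + 1) - L ! j"
    | "\<And>i j. i < j \<Longrightarrow> j + 1 < card A \<Longrightarrow> - L ! (i + 1) - - L ! i < - L ! (j + 1) - - L ! j"
    using \<open>convex_set A\<close> unfolding convex_set_def Let_def L_def by fastforce
  then show ?thesis
  proof cases
    case 1
    show ?thesis using gaps_increasing_shift[of "card A" "(!) L", OF 1 assms(2-4)] by simp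
  next
    case 2
    show ?thesis using gaps_increasing_shift[of "card A" "\<lambda>k. - L ! k", OF 2 assms(2-4)] by simp
  qed
qed

lemma convex_set_rank_shift_inj:
  assumes cA: "convex_set A" and a1: "a1 \<in> A" "a1 + d \<in> A" and a2: "a2 \<in> A" "a2 + d \<in> A"
    and "0 < d"
    and same_step: "rank_in A (a1 + d) - rank_in A a1 = rank_in A (a2 + d) - rank_in A a2"
  shows "a1 = a2"
proof -
  have fin: "finite A" using cA by (simp add: convex_set_def)
  let ?L = "sorted_list_of_set A"
  define s where "s = rank_in A (a1 + d) - rank_in A a1"
  have s: "0 < s" and r1: "rank_in A (a1 + d) = rank_in A a1 + s"
    using rank_in_strict_mono[OF fin a1(1), of "a1 + d"] \<open>0 < d\<close> by (simp_all add: s_def)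
  have r2: "rank_in A (a2 + d) = rank_in A a2 + s"
    using rank_in_strict_mono[OF fin a2(1), of "a2 + d"] \<open>0 < d\<close> same_step by (simp add: s_def)
  have gap: "?L ! (rank_in A a + s) - ?L ! rank_in A a = d"
    if "a \<in> A" "a + d \<in> A" "rank_in A (a + d) = rank_in A a + s" for a
    using that nth_sorted_list_of_set_rank_in[OF fin] by (metis add_diff_cancel_left')
  have bound: "rank_in A a + s < card A"
    if "a + d \<in> A" "rank_in A (a + d) = rank_in A a + s" for a
    using that rank_in_less_card[OF fin] by metis
  have "rank_in A a1 = rank_in A a2"
  proof (rule ccontr)
    assume "rank_in A a1 \<noteq> rank_in A a2"
    then consider "rank_in A a1 < rank_in A a2" | "rank_in A a2 < rank_in A a1" by linarith
    then show False
    proof cases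
      case 1
      show False using convex_set_shifted_gaps_neq[OF cA 1 s bound[OF a2(2) r2]]
          gap[OF a1 r1] gap[OF a2 r2] by simp
    next
      case 2
      show False using convex_set_shifted_gaps_neq[OF cA 2 s bound[OF a1(2) r1]]
          gap[OF a1 r1] gap[OF a2 r2] by simp
    qed
  qed
  then show ?thesis using inj_on_rank_in[OF fin] a1(1) a2(1) by (meson inj_onD)
qed

definition reps :: "real set \<Rightarrow> real set \<Rightarrow> real \<Rightarrow> real set" where
  "reps A B x = {a \<in> A. x - a \<in> B}"

definition next_rep :: "real set \<Rightarrow> real set \<Rightarrow> real \<Rightarrow> real \<Rightarrow> real" where
  "next_rep A B x a = Min {a' \<in> reps A B x. a < a'}"

definition nonlast_reps :: "real set \<Rightarrow> real set \<Rightarrow> real \<Rightarrow> real set" where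
  "nonlast_reps A B x = reps A B x - {Max (reps A B x)}"

definition rank_step_A :: "real set \<Rightarrow> real set \<Rightarrow> real \<Rightarrow> real \<Rightarrow> nat" where
  "rank_step_A A B x a = rank_in A (next_rep A B x a) - rank_in A a"

definition rank_step_B :: "real set \<Rightarrow> real set \<Rightarrow> real \<Rightarrow> real \<Rightarrow> nat" where
  "rank_step_B A B x a = rank_in B (x - a) - rank_in B (x - next_rep A B x a)"

definition good_reps :: "real set \<Rightarrow> real set \<Rightarrow> real \<Rightarrow> real \<Rightarrow> real \<Rightarrow> real set" where
  "good_reps A B \<sigma> \<tau> x =
     {a \<in> nonlast_reps A B x. real (rank_step_A A B x a) \<le> \<sigma> \<and> real (rank_step_B A B x a) \<le> \<tau>}"

lemma rep_eq_card_reps: "rep A B x = card (reps A B x)"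
proof -
  have "{(a, b). a \<in> A \<and> b \<in> B \<and> a + b = x} = (\<lambda>a. (a, x - a)) ` reps A B x"
    unfolding reps_def by (auto simp: image_iff)
  moreover have "inj_on (\<lambda>a. (a, x - a)) (reps A B x)" by (auto simp: inj_on_def)
  ultimately show ?thesis unfolding rep_def by (simp add: card_image)
qed

lemma finite_reps: "finite A \<Longrightarrow> finite (reps A B x)"
  unfolding reps_def by simp

lemma finite_nonlast_reps: "finite A \<Longrightarrow> finite (nonlast_reps A B x)"
  unfolding nonlast_reps_def by (simp add: finite_reps)

lemma next_rep_spec:
  assumes fin: "finite A" and a: "a \<in> nonlast_reps A B x"
  shows "next_rep A B x a \<in> reps A B x" "a < next_rep A B x a"
    and "\<And>a'. a' \<in> reps A B x \<Longrightarrow> a < a' \<Longrightarrow> next_rep A B x a \<le> a'"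
proof -
  let ?S = "{a' \<in> reps A B x. a < a'}"
  have fS: "finite ?S" using finite_reps[OF fin] by simp
  have "a \<in> reps A B x" "a \<noteq> Max (reps A B x)" using a by (auto simp: nonlast_reps_def)
  then have "Max (reps A B x) \<in> ?S"
    using finite_reps[OF fin] by (auto intro: Max_in simp: order.not_eq_order_implies_strict)
  then have "Min ?S \<in> ?S" using fS by (intro Min_in) auto
  then show "next_rep A B x a \<in> reps A B x" "a < next_rep A B x a" by (auto simp: next_rep_def)
  show "next_rep A B x a \<le> a'" if "a' \<in> reps A B x" "a < a'" for a'
    using that fS by (auto simp: next_rep_def)
qed

lemma rank_step_A_pos: "finite A \<Longrightarrow> a \<in> nonlast_reps A B x \<Longrightarrow> 0 < rank_step_A A B x a"
  using rank_in_strict_mono[of A a "next_rep A B x a"] next_rep_spec[of A a B x]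
  by (auto simp: rank_step_A_def nonlast_reps_def reps_def)

lemma rank_step_B_pos:
  "finite A \<Longrightarrow> finite B \<Longrightarrow> a \<in> nonlast_reps A B x \<Longrightarrow> 0 < rank_step_B A B x a"
  using rank_in_strict_mono[of B "x - next_rep A B x a" "x - a"] next_rep_spec[of A a B x]
  by (auto simp: rank_step_B_def reps_def)

lemma sum_interval_lengths_le:
  fixes p q :: "'a::linorder \<Rightarrow> nat"
  assumes "finite I" and "\<And>a. a \<in> I \<Longrightarrow> q a \<le> n"
    and "\<And>a a'. a \<in> I \<Longrightarrow> a' \<in> I \<Longrightarrow> a < a' \<Longrightarrow> q a' \<le> p a \<or> q a \<le> p a'"
  shows "(\<Sum>a\<in>I. q a - p a) \<le> n"
proof -
  have "(\<Sum>a\<in>I. q a - p a) = (\<Sum>a\<in>I. card {p a..<q a})" by simp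
  also have "\<dots> = card (\<Union>a\<in>I. {p a..<q a})"
  proof (rule card_UN_disjoint[symmetric])
    show "\<forall>a\<in>I. \<forall>a'\<in>I. a \<noteq> a' \<longrightarrow> {p a..<q a} \<inter> {p a'..<q a'} = {}"
      using assms(3) by (metis disjoint_iff atLeastLessThan_iff linorder_neqE order.trans not_less)
  qed (use assms(1) in auto)
  also have "\<dots> \<le> card {..<n}"
    using assms(2) by (intro card_mono) (auto intro: less_le_trans)
  finally show ?thesis by simp
qed

lemma sum_rank_step_A_le:
  assumes fA: "finite A"
  shows "(\<Sum>a\<in>nonlast_reps A B x. rank_step_A A B x a) \<le> card A"
  unfolding rank_step_A_def
proof (rule sum_interval_lengths_le[OF finite_nonlast_reps[OF fA]])
  fix a assume "a \<in> nonlast_reps A B x"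
  then show "rank_in A (next_rep A B x a) \<le> card A"
    using next_rep_spec(1)[OF fA] rank_in_less_card[OF fA] by (fastforce simp: reps_def)
next
  fix a a' assume "a \<in> nonlast_reps A B x" "a' \<in> nonlast_reps A B x" "a < a'"
  then have "rank_in A (next_rep A B x a) \<le> rank_in A a'"
    using next_rep_spec(3)[OF fA] rank_in_mono[OF fA] by (simp add: nonlast_reps_def)
  then show "rank_in A (next_rep A B x a') \<le> rank_in A a \<or> rank_in A (next_rep A B x a) \<le> rank_in A a'"
    by simp
qed

lemma sum_rank_step_B_le:
  assumes fA: "finite A" and fB: "finite B"
  shows "(\<Sum>a\<in>nonlast_reps A B x. rank_step_B A B x a) \<le> card B"
  unfolding rank_step_B_def
proof (rule sum_interval_lengths_le[OF finite_nonlast_reps[OF fA]])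
  fix a assume "a \<in> nonlast_reps A B x"
  then show "rank_in B (x - a) \<le> card B"
    using rank_in_less_card[OF fB] by (fastforce simp: nonlast_reps_def reps_def)
next
  fix a a' assume "a \<in> nonlast_reps A B x" "a' \<in> nonlast_reps A B x" "a < a'"
  then have "rank_in B (x - a') \<le> rank_in B (x - next_rep A B x a)"
    using next_rep_spec(3)[OF fA] rank_in_mono[OF fB] by (simp add: nonlast_reps_def)
  then show "rank_in B (x - a') \<le> rank_in B (x - next_rep A B x a) \<or>
      rank_in B (x - a) \<le> rank_in B (x - next_rep A B x a')"
    by simp
qed

lemma card_exceeding_le:
  fixes f :: "'a \<Rightarrow> nat"
  assumes "finite I" and "(\<Sum>a\<in>I. f a) \<le> n" and "0 < \<sigma>"
  shows "real (card {a \<in> I. \<sigma> < real (f a)}) \<le> real n / \<sigma>"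
proof -
  let ?J = "{a \<in> I. \<sigma> < real (f a)}"
  have "real (card ?J) * \<sigma> = (\<Sum>a\<in>?J. \<sigma>)" by simp
  also have "\<dots> \<le> (\<Sum>a\<in>?J. real (f a))" by (rule sum_mono) auto
  also have "\<dots> \<le> (\<Sum>a\<in>I. real (f a))" by (rule sum_mono2) (use assms(1) in auto)
  also have "\<dots> \<le> real n" using assms(2) by (metis of_nat_le_iff of_nat_sum)
  finally show ?thesis using assms(3) by (simp add: field_simps)
qed

lemma card_good_reps_ge:
  assumes fA: "finite A" and fB: "finite B" and "0 < \<sigma>" and "0 < \<tau>"
  shows "real (rep A B x) - 1 - real (card A) / \<sigma> - real (card B) / \<tau>
           \<le> real (card (good_reps A B \<sigma> \<tau> x))"
proof -
  define bad_A where "bad_A = {a \<in> nonlast_reps A B x. \<sigma> < real (rank_step_A A B x a)}"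
  define bad_B where "bad_B = {a \<in> nonlast_reps A B x. \<tau> < real (rank_step_B A B x a)}"
  have "real (card bad_A) \<le> real (card A) / \<sigma>"
    unfolding bad_A_def
    by (rule card_exceeding_le[OF finite_nonlast_reps[OF fA] sum_rank_step_A_le[OF fA] \<open>0 < \<sigma>\<close>])
  moreover have "real (card bad_B) \<le> real (card B) / \<tau>"
    unfolding bad_B_def
    by (rule card_exceeding_le[OF finite_nonlast_reps[OF fA] sum_rank_step_B_le[OF fA fB] \<open>0 < \<tau>\<close>])
  moreover have "card (reps A B x) \<le> card (good_reps A B \<sigma> \<tau> x) + card bad_A + card bad_B + 1"
  proof -
    let ?G = "good_reps A B \<sigma> \<tau> x"
    have "finite (?G \<union> bad_A \<union> bad_B)"
      using finite_nonlast_reps[OF fA] by (simp add: good_reps_def bad_A_def bad_B_def)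
    then have "card (reps A B x) \<le> card (?G \<union> bad_A \<union> bad_B \<union> {Max (reps A B x)})"
      by (intro card_mono) (auto simp: good_reps_def bad_A_def bad_B_def nonlast_reps_def)
    also have "\<dots> \<le> card (?G \<union> bad_A \<union> bad_B) + card {Max (reps A B x)}"
      by (rule card_Un_le)
    also have "\<dots> \<le> card ?G + card bad_A + card bad_B + 1"
      using card_Un_le[of ?G bad_A] card_Un_le[of "?G \<union> bad_A" bad_B] by simp
    finally show ?thesis .
  qed
  ultimately show ?thesis by (simp add: rep_eq_card_reps)
qed

text \<open>The B-step recovers x - next_rep, hence the difference next_rep - a; convexity then
  recovers a from that difference and the A-step.\<close>
lemma inj_on_rep_code:
  assumes cA: "convex_set A" and fB: "finite B"
  shows "inj_on (\<lambda>(x, a). (x - a, rank_step_B A B x a, rank_step_A A B x a))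
           (Sigma UNIV (nonlast_reps A B))"
proof (rule inj_onI, clarsimp)
  fix x1 a1 x2 a2
  assume a1: "a1 \<in> nonlast_reps A B x1" and a2: "a2 \<in> nonlast_reps A B x2"
    and b: "x1 - a1 = x2 - a2"
    and step_B: "rank_step_B A B x1 a1 = rank_step_B A B x2 a2"
    and step_A: "rank_step_A A B x1 a1 = rank_step_A A B x2 a2"
  have fA: "finite A" using cA by (simp add: convex_set_def)
  define c1 where "c1 = next_rep A B x1 a1"
  define c2 where "c2 = next_rep A B x2 a2"
  have c1: "c1 \<in> A" "x1 - c1 \<in> B" "a1 < c1" and c2: "c2 \<in> A" "x2 - c2 \<in> B" "a2 < c2"
    using next_rep_spec[OF fA a1] next_rep_spec[OF fA a2] by (auto simp: c1_def c2_def reps_def)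
  have "rank_in B (x1 - c1) < rank_in B (x1 - a1)" "rank_in B (x2 - c2) < rank_in B (x2 - a2)"
    using rank_in_strict_mono[OF fB] c1 c2 by simp_all
  then have "rank_in B (x1 - c1) = rank_in B (x2 - c2)"
    using step_B b by (simp add: rank_step_B_def c1_def c2_def)
  then have "x1 - c1 = x2 - c2" using inj_on_rank_in[OF fB] c1(2) c2(2) by (meson inj_onD)
  then have "c2 = a2 + (c1 - a1)" using b by simp
  then have "a1 = a2"
    using convex_set_rank_shift_inj[OF cA, of a1 "c1 - a1" a2] step_A c1 c2 a1 a2
    by (auto simp: rank_step_A_def c1_def c2_def nonlast_reps_def reps_def)
  then show "x1 = x2 \<and> a1 = a2" using b by simp
qed

lemma sum_card_good_reps_le:
  assumes cA: "convex_set A" and fB: "finite B" and fX: "finite X"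
    and "0 \<le> \<sigma>" and "0 \<le> \<tau>"
  shows "(\<Sum>x\<in>X. real (card (good_reps A B \<sigma> \<tau> x))) \<le> real (card B) * \<tau> * \<sigma>"
proof -
  have fA: "finite A" using cA by (simp add: convex_set_def)
  let ?code = "\<lambda>(x, a). (x - a, rank_step_B A B x a, rank_step_A A B x a)"
  let ?box = "B \<times> {1..nat \<lfloor>\<tau>\<rfloor>} \<times> {1..nat \<lfloor>\<sigma>\<rfloor>}"
  have good_sub: "good_reps A B \<sigma> \<tau> x \<subseteq> nonlast_reps A B x" for x
    by (auto simp: good_reps_def)
  have "inj_on ?code (Sigma X (good_reps A B \<sigma> \<tau>))"
    by (rule inj_on_subset[OF inj_on_rep_code[OF cA fB]]) (use good_sub in auto)
  moreover have "?code ` Sigma X (good_reps A B \<sigma> \<tau>) \<subseteq> ?box"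
  proof (rule image_subsetI)
    fix p assume "p \<in> Sigma X (good_reps A B \<sigma> \<tau>)"
    then obtain x a where "p = (x, a)" "a \<in> good_reps A B \<sigma> \<tau> x" by auto
    then show "?code p \<in> ?box"
      using rank_step_A_pos[OF fA] rank_step_B_pos[OF fA fB] good_sub
      by (fastforce simp: good_reps_def nonlast_reps_def reps_def le_nat_floor Suc_le_eq)
  qed
  ultimately have "card (Sigma X (good_reps A B \<sigma> \<tau>)) \<le> card ?box"
    by (rule card_inj_on_le) (use fB in simp)
  then have "(\<Sum>x\<in>X. card (good_reps A B \<sigma> \<tau> x)) \<le> card B * nat \<lfloor>\<tau>\<rfloor> * nat \<lfloor>\<sigma>\<rfloor>"
    using fX finite_subset[OF good_sub finite_nonlast_reps[OF fA]]
    by (simp add: card_SigmaI card_cartesian_product)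
  then have "(\<Sum>x\<in>X. real (card (good_reps A B \<sigma> \<tau> x)))
               \<le> real (card B) * real (nat \<lfloor>\<tau>\<rfloor>) * real (nat \<lfloor>\<sigma>\<rfloor>)"
    by (metis of_nat_le_iff of_nat_mult of_nat_sum)
  also have "\<dots> \<le> real (card B) * \<tau> * \<sigma>"
    using \<open>0 \<le> \<sigma>\<close> \<open>0 \<le> \<tau>\<close> by (intro mult_mono) auto
  finally show ?thesis .
qed

lemma Xr_subset_sums: "Xr A B r \<subseteq> (\<lambda>(a, b). a + b) ` (A \<times> B)"
  by (auto simp: Xr_def sumset_def)

lemma finite_Xr: "finite A \<Longrightarrow> finite B \<Longrightarrow> finite (Xr A B r)"
  by (rule finite_subset[OF Xr_subset_sums]) simp

lemma card_Xr_le_card_mult: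
  assumes "finite A" "finite B"
  shows "card (Xr A B r) \<le> card A * card B"
proof -
  have "card (Xr A B r) \<le> card ((\<lambda>(a, b). a + b) ` (A \<times> B))"
    by (rule card_mono[OF _ Xr_subset_sums]) (simp add: assms)
  also have "\<dots> \<le> card (A \<times> B)" by (rule card_image_le) (simp add: assms)
  finally show ?thesis by (simp add: card_cartesian_product)
qed

lemma card_Xr_le_large_r:
  assumes cA: "convex_set A" and fB: "finite B" and r: "4 \<le> r"
  shows "real (card (Xr A B r)) * r ^ 3 \<le> 64 * real (card A) * real (card B) ^ 2"
proof (cases "Xr A B r = {}")
  case False
  have fA: "finite A" using cA by (simp add: convex_set_def)
  define \<sigma> where "\<sigma> = 4 * real (card A) / r"
  define \<tau> where "\<tau> = 4 * real (card B) / r"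
  obtain x0 where "x0 \<in> Xr A B r" using False by blast
  then have "reps A B x0 \<noteq> {}"
    using r by (auto simp: Xr_def rep_eq_card_reps)
  then have "0 < card A" "0 < card B"
    using fA fB by (auto simp: reps_def card_gt_0_iff)
  then have "0 < \<sigma>" "0 < \<tau>" "real (card A) / \<sigma> = r / 4" "real (card B) / \<tau> = r / 4"
    using r by (simp_all add: \<sigma>_def \<tau>_def)
  have "r / 4 \<le> real (card (good_reps A B \<sigma> \<tau> x))" if "x \<in> Xr A B r" for x
  proof -
    have "r \<le> real (rep A B x)" using that by (simp add: Xr_def)
    then show ?thesis
      using card_good_reps_ge[OF fA fB \<open>0 < \<sigma>\<close> \<open>0 < \<tau>\<close>, of x]
        \<open>real (card A) / \<sigma> = r / 4\<close> \<open>real (card B) / \<tau> = r / 4\<close> r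
      by linarith
  qed
  then have "real (card (Xr A B r)) * (r / 4) \<le> (\<Sum>x\<in>Xr A B r. real (card (good_reps A B \<sigma> \<tau> x)))"
    using sum_mono[of "Xr A B r" "\<lambda>_. r / 4"] by simp
  also have "\<dots> \<le> real (card B) * \<tau> * \<sigma>"
    using sum_card_good_reps_le[OF cA fB finite_Xr[OF fA fB]] \<open>0 < \<sigma>\<close> \<open>0 < \<tau>\<close> by simp
  finally show ?thesis
    using r by (simp add: \<sigma>_def \<tau>_def field_simps power2_eq_square power3_eq_cube)
qed simp

lemma card_Xr_le:
  assumes cA: "convex_set A" and fB: "finite B" and r: "1 \<le> r"
  shows "real (card (Xr A B r)) \<le> 64 * real (card A) * real (card B) ^ 2 / r ^ 3"
proof -
  have "real (card (Xr A B r)) * r ^ 3 \<le> 64 * real (card A) * real (card B) ^ 2"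
  proof (cases "4 \<le> r")
    case True
    then show ?thesis using card_Xr_le_large_r[OF cA fB] by simp
  next
    case False
    have fA: "finite A" using cA by (simp add: convex_set_def)
    have "r ^ 3 \<le> 64" using False r power_mono[of r 4 3] by simp
    moreover have "real (card B) \<le> real (card B) ^ 2" by (cases "card B") (simp_all add: power2_eq_square)
    moreover have "real (card (Xr A B r)) \<le> real (card A) * real (card B)"
      using card_Xr_le_card_mult[OF fA fB] by (metis of_nat_le_iff of_nat_mult)
    ultimately have "real (card (Xr A B r)) * r ^ 3 \<le> real (card A) * real (card B) * 64"
      using r by (intro mult_mono) auto
    also have "\<dots> \<le> 64 * real (card A) * real (card B) ^ 2"
      using \<open>real (card B) \<le> real (card B) ^ 2\<close> by (simp add: mult_left_mono)
    finally show ?thesis .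
  qed
  then show ?thesis using r by (simp add: field_simps)
qed

theorem mainTheorem14:
  "\<exists>C>0. \<forall>(A::real set) (B::real set) (r::real).
      convex_set A \<and> finite B \<and> r \<ge> 1 \<longrightarrow>
      real (card (Xr A B r)) \<le> C * real (card A) * real (card B) ^ 2 / r ^ 3"
  by (rule exI[of _ 64]) (auto intro: card_Xr_le)

end
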